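(* Let $M,K,T$ be positive integers, $P_{\max}>0$, and fix a device index $k\in\{1,\dots,K\}$ with constants $\sigma_k^2>0$, $\delta_k^2>0$, $\omega_k^2>0$ and a power-splitting ratio $\rho_k\in(0,1]$. Let $\hat{\mathbf H}=[\hat{\bm h}_1,\dots,\hat{\bm h}_K]\in\mathbb C^{M\times K}$ be a random matrix with $\mathbb E[\|\hat{\bm h}_k\|^2]<\infty$, and let $\bm\phi_k\sim\mathcal{CN}(0,\omega_k^2\mathbf I_M)$ be independent of $\hat{\mathbf H}$; set $\bm h_k=\hat{\bm h}_k+\bm\phi_k$. Let $\bm\Theta$ be a (measurable) beamforming policy, i.e. a map $\hat{\mathbf H}\mapsto \mathbf F(\hat{\mathbf H})=[\bm f_1,\dots,\bm f_K]\in\mathbb C^{M\times K}$ with $\mathrm{Tr}(\mathbf F\mathbf F^H)\le P_{\max}$ for every $\hat{\mathbf H}$. Define the SINR \[ \Gamma_k=\frac{\rho_k|\bm h_k^H\bm f_k|^2}{\rho_k\big(\sum_{m\neq k}|\bm h_k^H\bm f_m|^2+\sigma_k^2\big)+\delta_k^2}, \] the quantity $\overline r_k(\rho_k,\bm\Theta)=\mathbb E_{\hat{\mathbf H},\bm\phi_k}[\log_2(1+\Gamma_k)]$, and the ergodic rate \[ \hat r_k^\circ(\rho_k,\bm\Theta)=\overline r_k(\rho_k,\bm\Theta)-\frac1T\sum_{m=1}^K\log_2\!\Big(1+\frac{T}{\rho_k\sigma_k^2+\delta_k^2}\,\mathrm{Var}(\bm h_k^H\bm f_m)\Big), \] where $\mathrm{Var}(X)=\mathbb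 E|X-\mathbb E X|^2$ is taken over the joint distribution of $(\hat{\mathbf H},\bm\phi_k)$. Then \[ \overline r_k(\rho_k,\bm\Theta)-\frac1T\sum_{m=1}^K\log_2\!\Big(1+\frac{TP_{\max}}{\delta_k^2}\,\mathbb E_{\hat{\mathbf H},\bm\phi_k}\big[\|\hat{\bm h}_k+\bm\phi_k\|^2\big]\Big)\;\le\;\hat r_k^\circ(\rho_k,\bm\Theta)\;\le\;\overline r_k(\rho_k,\bm\Theta). \]
   Context: Setting: downlink of a multi-antenna base station with $M$ antennas serving $K$ single-antenna devices; $\bm f_m$ is the beamformer for device $m$, $\rho_k$ is the fraction of received power sent to the information decoder of device $k$, $\sigma_k^2$ is the antenna noise variance, $\delta_k^2$ is the decoder noise variance, $\hat{\bm h}_k$ is the estimated channel and $\bm\phi_k$ the channel estimation error, $T$ is the channel coherence length. $\mathcal{CN}(0,\omega_k^2\mathbf I_M)$ denotes the circularly symmetric complex Gaussian distribution. *)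

theory Defs
  imports "HOL-Probability.Probability"
begin

(* A vector h in C^M is "complex ^ 'm"; a matrix [h_1,...,h_K] in C^{M x K} is
   represented by its list of columns, "complex ^ 'm ^ 'k", so that H $ k = h_k. *)

definition herm :: "complex ^ 'm \<Rightarrow> complex ^ 'm \<Rightarrow> complex" where
  "herm h f = (\<Sum>i\<in>UNIV. cnj (h $ i) * (f $ i))"

definition trFFH :: "complex ^ 'm ^ 'k \<Rightarrow> real" where
  "trFFH F = (\<Sum>m\<in>UNIV. (norm (F $ m))\<^sup>2)"

definition sinr :: "real \<Rightarrow> real \<Rightarrow> real \<Rightarrow> complex ^ 'm \<Rightarrow> complex ^ 'm ^ 'k \<Rightarrow> 'k \<Rightarrow> real" where
  "sinr \<rho> sigma2 delta2 h F k =
     \<rho> * (cmod (herm h (F $ k)))\<^sup>2 /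
     (\<rho> * ((\<Sum>m\<in>UNIV - {k}. (cmod (herm h (F $ m)))\<^sup>2) + sigma2) + delta2)"

definition cvar :: "'w measure \<Rightarrow> ('w \<Rightarrow> complex) \<Rightarrow> real" where
  "cvar P X = (\<integral>x. (cmod (X x - (\<integral>y. X y \<partial>P)))\<^sup>2 \<partial>P)"

(* phi ~ CN(0, omega2 I_M): real and imaginary parts of all components are
   independent real Gaussians with mean 0 and variance omega2/2 *)
definition complex_gaussian_vec :: "'w measure \<Rightarrow> ('w \<Rightarrow> complex ^ 'm) \<Rightarrow> real \<Rightarrow> bool" where
  "complex_gaussian_vec P phi omega2 \<longleftrightarrow>
     phi \<in> borel_measurable P \<and>
     prob_space.indep_vars P (\<lambda>_. borel)
        (\<lambda>(i, b) x. if b then Re (phi x $ i) else Im (phi x $ i)) (UNIV :: ('m \<times> bool) set) \<and>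
     (\<forall>i. distributed P lborel (\<lambda>x. Re (phi x $ i)) (normal_density 0 (sqrt (omega2 / 2))) \<and>
          distributed P lborel (\<lambda>x. Im (phi x $ i)) (normal_density 0 (sqrt (omega2 / 2))))"

definition rbar :: "'w measure \<Rightarrow> ('w \<Rightarrow> complex ^ 'm ^ 'k) \<Rightarrow> ('w \<Rightarrow> complex ^ 'm)
     \<Rightarrow> (complex ^ 'm ^ 'k \<Rightarrow> complex ^ 'm ^ 'k) \<Rightarrow> real \<Rightarrow> real \<Rightarrow> real \<Rightarrow> 'k \<Rightarrow> real" where
  "rbar P Hhat phi F \<rho> sigma2 delta2 k =
     (\<integral>x. log 2 (1 + sinr \<rho> sigma2 delta2 (Hhat x $ k + phi x) (F (Hhat x)) k) \<partial>P)"

definition rhat :: "'w measure \<Rightarrow> ('w \<Rightarrow> complex ^ 'm ^ 'k) \<Rightarrow> ('w \<Rightarrow> complex ^ 'm)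
     \<Rightarrow> (complex ^ 'm ^ 'k \<Rightarrow> complex ^ 'm ^ 'k) \<Rightarrow> real \<Rightarrow> real \<Rightarrow> real \<Rightarrow> nat \<Rightarrow> 'k \<Rightarrow> real" where
  "rhat P Hhat phi F \<rho> sigma2 delta2 T k =
     rbar P Hhat phi F \<rho> sigma2 delta2 k
     - 1 / real T * (\<Sum>m\<in>UNIV. log 2 (1 + real T / (\<rho> * sigma2 + delta2) *
          cvar P (\<lambda>x. herm (Hhat x $ k + phi x) (F (Hhat x) $ m))))"

end

theory Submission
  imports Defs
begin

text \<open>
  Both bounds only concern the penalty term. Each variance is nonnegative, so the
  penalty is nonnegative, which gives the upper bound. For the lower bound,
  \<open>Var(h\<^sub>k\<^sup>H f\<^sub>m) \<le> E |h\<^sub>k\<^sup>H f\<^sub>m|\<^sup>2 \<le> E (\<parallel>h\<^sub>k\<parallel>\<^sup>2 \<parallel>f\<^sub>m\<parallel>\<^sup>2) \<le> P\<^sub>m\<^sub>a\<^sub>x E \<parallel>h\<^sub>k\<parallel>\<^sup>2\<close>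
  by Cauchy-Schwarz and the power constraint, and \<open>\<rho>\<^sub>k \<sigma>\<^sub>k\<^sup>2 + \<delta>\<^sub>k\<^sup>2 \<ge> \<delta>\<^sub>k\<^sup>2\<close>.
  Gaussianity of \<open>\<phi>\<^sub>k\<close> is needed only to make \<open>E \<parallel>h\<^sub>k\<parallel>\<^sup>2\<close> finite.
\<close>

lemma borel_measurable_vec_nth [measurable (raw)]:
  fixes f :: "'a \<Rightarrow> 'b::{real_normed_vector, second_countable_topology} ^ 'n"
  shows "f \<in> borel_measurable M \<Longrightarrow> (\<lambda>x. f x $ i) \<in> borel_measurable M"
  by (rule borel_measurable_continuous_on[where f = "\<lambda>v. v $ i"])
     (auto intro: linear_continuous_on bounded_linear_vec_nth)

lemma borel_measurable_herm [measurable (raw)]: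
  fixes f g :: "'a \<Rightarrow> complex ^ 'm"
  assumes [measurable]: "f \<in> borel_measurable M" "g \<in> borel_measurable M"
  shows "(\<lambda>x. herm (f x) (g x)) \<in> borel_measurable M"
proof -
  have "(\<lambda>x. cnj (f x $ i)) \<in> borel_measurable M" for i
    by (rule borel_measurable_continuous_on[OF _ borel_measurable_vec_nth]) (auto intro: continuous_intros)
  then show ?thesis
    unfolding herm_def by (intro borel_measurable_sum borel_measurable_times borel_measurable_vec_nth assms)
qed

lemma norm_herm_le: "cmod (herm h f) \<le> norm h * norm f"
proof -
  have "cmod (herm h f) \<le> (\<Sum>i\<in>UNIV. \<bar>cmod (h $ i)\<bar> * \<bar>cmod (f $ i)\<bar>)"
    unfolding herm_def by (rule order_trans[OF norm_sum]) (simp add: norm_mult)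
  also have "\<dots> \<le> norm h * norm f"
    unfolding norm_vec_def by (rule L2_set_mult_ineq)
  finally show ?thesis .
qed

lemma norm_nth_power2_le_trFFH: "(norm (F $ m))\<^sup>2 \<le> trFFH F"
  unfolding trFFH_def by (rule member_le_sum) auto

lemma cmod_herm_power2_le_trFFH: "(cmod (herm h (F $ m)))\<^sup>2 \<le> trFFH F * (norm h)\<^sup>2"
proof -
  have "(cmod (herm h (F $ m)))\<^sup>2 \<le> (norm h)\<^sup>2 * (norm (F $ m))\<^sup>2"
    using norm_herm_le[of h "F $ m"] by (simp add: power_mono flip: power_mult_distrib)
  also have "\<dots> \<le> (norm h)\<^sup>2 * trFFH F"
    by (intro mult_left_mono norm_nth_power2_le_trFFH) simp
  finally show ?thesis by (simp add: mult.commute)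
qed

lemma cvar_nonneg: "0 \<le> cvar P X"
  unfolding cvar_def by simp

lemma (in prob_space) cvar_eq_variance_Re_Im:
  fixes X :: "'a \<Rightarrow> complex"
  assumes X: "integrable M X"
    and Re2: "integrable M (\<lambda>x. (Re (X x))\<^sup>2)" and Im2: "integrable M (\<lambda>x. (Im (X x))\<^sup>2)"
  shows "cvar M X = variance (\<lambda>x. Re (X x)) + variance (\<lambda>x. Im (X x))"
proof -
  have "integrable M (\<lambda>x. (Re (X x) - expectation (\<lambda>x. Re (X x)))\<^sup>2)"
    "integrable M (\<lambda>x. (Im (X x) - expectation (\<lambda>x. Im (X x)))\<^sup>2)"
    using X Re2 Im2 by (simp_all add: power2_diff)
  with X show ?thesis
    unfolding cvar_def cmod_power2 by simp
qed

lemma (in prob_space) cvar_le_second_moment: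
  fixes X :: "'a \<Rightarrow> complex"
  assumes [measurable]: "X \<in> borel_measurable M"
    and sq: "integrable M (\<lambda>x. (cmod (X x))\<^sup>2)"
  shows "cvar M X \<le> expectation (\<lambda>x. (cmod (X x))\<^sup>2)"
proof -
  have Re2: "integrable M (\<lambda>x. (Re (X x))\<^sup>2)"
    by (rule Bochner_Integration.integrable_bound[OF sq]) (auto simp: cmod_power2)
  have Im2: "integrable M (\<lambda>x. (Im (X x))\<^sup>2)"
    by (rule Bochner_Integration.integrable_bound[OF sq]) (auto simp: cmod_power2)
  have "integrable M (\<lambda>x. (X x)\<^sup>2)"
    by (rule Bochner_Integration.integrable_bound[OF sq]) (auto simp: norm_power)
  then have X: "integrable M X"
    by (rule square_integrable_imp_integrable[rotated]) measurable
  have "cvar M X = variance (\<lambda>x. Re (X x)) + variance (\<lambda>x. Im (X x))"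
    using X Re2 Im2 by (rule cvar_eq_variance_Re_Im)
  also have "\<dots> \<le> expectation (\<lambda>x. (Re (X x))\<^sup>2) + expectation (\<lambda>x. (Im (X x))\<^sup>2)"
    using X Re2 Im2 variance_eq[of "\<lambda>x. Re (X x)"] variance_eq[of "\<lambda>x. Im (X x)"] by simp
  also have "\<dots> = expectation (\<lambda>x. (cmod (X x))\<^sup>2)"
    unfolding cmod_power2 using Re2 Im2 by simp
  finally show ?thesis .
qed

lemma integrable_norm_power2_add:
  fixes f g :: "'a \<Rightarrow> 'b::{real_normed_vector, second_countable_topology}"
  assumes [measurable]: "f \<in> borel_measurable M" "g \<in> borel_measurable M"
    and "integrable M (\<lambda>x. (norm (f x))\<^sup>2)" "integrable M (\<lambda>x. (norm (g x))\<^sup>2)"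
  shows "integrable M (\<lambda>x. (norm (f x + g x))\<^sup>2)"
proof (rule Bochner_Integration.integrable_bound)
  show "integrable M (\<lambda>x. 2 * (norm (f x))\<^sup>2 + 2 * (norm (g x))\<^sup>2)"
    using assms(3,4) by simp
  have "(norm (a + b))\<^sup>2 \<le> 2 * (norm a)\<^sup>2 + 2 * (norm b)\<^sup>2" for a b :: 'b
  proof -
    have "(norm (a + b))\<^sup>2 \<le> (norm a + norm b)\<^sup>2"
      by (intro power_mono norm_triangle_ineq) simp
    also have "\<dots> \<le> 2 * (norm a)\<^sup>2 + 2 * (norm b)\<^sup>2"
      using sum_squares_bound[of "norm a" "norm b"] by (simp add: power2_sum)
    finally show ?thesis .
  qed
  then show "AE x in M. norm ((norm (f x + g x))\<^sup>2) \<le> norm (2 * (norm (f x))\<^sup>2 + 2 * (norm (g x))\<^sup>2)"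
    by simp
qed measurable

lemma complex_gaussian_vec_integrable_norm_power2:
  fixes phi :: "'a \<Rightarrow> complex ^ 'm"
  assumes "complex_gaussian_vec P phi omega2" and "0 < omega2"
  shows "integrable P (\<lambda>x. (norm (phi x))\<^sup>2)"
proof -
  have moment: "integrable lborel (\<lambda>x. normal_density 0 (sqrt (omega2 / 2)) x * x\<^sup>2)"
    using integrable_normal_moment[where \<mu> = 0 and k = 2] \<open>0 < omega2\<close> by simp
  have "integrable P (\<lambda>x. (Y x)\<^sup>2)"
    if "distributed P lborel Y (normal_density 0 (sqrt (omega2 / 2)))" for Y
    using distributed_integrable[OF that, of "\<lambda>x. x\<^sup>2"] moment
    by (simp add: normal_density_nonneg)
  with assms(1) have "integrable P (\<lambda>x. (Re (phi x $ i))\<^sup>2 + (Im (phi x $ i))\<^sup>2)" for i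
    unfolding complex_gaussian_vec_def by simp
  then show ?thesis
    by (simp add: norm_vec_def L2_set_def sum_nonneg cmod_power2)
qed

lemma (in prob_space) cvar_herm_le_power_budget:
  fixes h :: "'a \<Rightarrow> complex ^ 'm" and G :: "'a \<Rightarrow> complex ^ 'm ^ 'k"
  assumes [measurable]: "h \<in> borel_measurable M" "G \<in> borel_measurable M"
    and h2: "integrable M (\<lambda>x. (norm (h x))\<^sup>2)"
    and budget: "\<And>x. trFFH (G x) \<le> Pmax"
  shows "cvar M (\<lambda>x. herm (h x) (G x $ m)) \<le> Pmax * expectation (\<lambda>x. (norm (h x))\<^sup>2)"
proof -
  have bound: "(cmod (herm (h x) (G x $ m)))\<^sup>2 \<le> Pmax * (norm (h x))\<^sup>2" for x
    using cmod_herm_power2_le_trFFH[of "h x" "G x" m] budget[of x]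
    by (meson mult_right_mono order_trans zero_le_power2)
  have X2: "integrable M (\<lambda>x. (cmod (herm (h x) (G x $ m)))\<^sup>2)"
    by (rule Bochner_Integration.integrable_bound[where f = "\<lambda>x. Pmax * (norm (h x))\<^sup>2"])
       (use h2 bound in \<open>auto intro: order_trans[OF _ abs_ge_self]\<close>)
  have "cvar M (\<lambda>x. herm (h x) (G x $ m)) \<le> (\<integral>x. (cmod (herm (h x) (G x $ m)))\<^sup>2 \<partial>M)"
    using X2 by (intro cvar_le_second_moment) measurable
  also have "\<dots> \<le> (\<integral>x. Pmax * (norm (h x))\<^sup>2 \<partial>M)"
    using X2 h2 bound by (intro integral_mono) auto
  finally show ?thesis by simp
qed

lemma log_penalty_bounds:
  fixes T d d' v B :: real
  assumes "0 \<le> T" "0 < d" "d \<le> d'" "0 \<le> v" "v \<le> B"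
  shows "0 \<le> log 2 (1 + T / d' * v)" "log 2 (1 + T / d' * v) \<le> log 2 (1 + T / d * B)"
proof -
  have "0 \<le> T / d' * v" using assms by simp
  then show "0 \<le> log 2 (1 + T / d' * v)" by simp
  have "T / d' * v \<le> T / d * B"
    using assms by (intro mult_mono divide_left_mono) auto
  with \<open>0 \<le> T / d' * v\<close> show "log 2 (1 + T / d' * v) \<le> log 2 (1 + T / d * B)" by simp
qed

theorem proposition1:
  fixes P :: "'w measure"
    and Hhat :: "'w \<Rightarrow> complex ^ 'm ^ 'k"
    and phi :: "'w \<Rightarrow> complex ^ 'm"
    and F :: "complex ^ 'm ^ 'k \<Rightarrow> complex ^ 'm ^ 'k"
    and k :: 'k and T :: nat
    and Pmax sigma2 delta2 omega2 \<rho> :: real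
  assumes "prob_space P"
    and "T > 0" and "Pmax > 0" and "sigma2 > 0" and "delta2 > 0" and "omega2 > 0"
    and "0 < \<rho>" and "\<rho> \<le> 1"
    and "Hhat \<in> borel_measurable P"
    and "integrable P (\<lambda>x. (norm (Hhat x $ k))\<^sup>2)"
    and "complex_gaussian_vec P phi omega2"
    and "prob_space.indep_set P (sets (vimage_algebra (space P) Hhat borel))
                               (sets (vimage_algebra (space P) phi borel))"
    and "F \<in> borel_measurable borel"
    and "\<And>H. trFFH (F H) \<le> Pmax"
  shows "rbar P Hhat phi F \<rho> sigma2 delta2 k
           - 1 / real T * (\<Sum>m::'k\<in>UNIV. log 2 (1 + real T * Pmax / delta2 *
                (\<integral>x. (norm (Hhat x $ k + phi x))\<^sup>2 \<partial>P)))
         \<le> rhat P Hhat phi F \<rho> sigma2 delta2 T k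
       \<and> rhat P Hhat phi F \<rho> sigma2 delta2 T k \<le> rbar P Hhat phi F \<rho> sigma2 delta2 k"
proof -
  interpret prob_space P by fact
  have [measurable]: "Hhat \<in> borel_measurable P" "phi \<in> borel_measurable P" "F \<in> borel_measurable borel"
    using assms(9,11,13) unfolding complex_gaussian_vec_def by auto
  define h where "h x = Hhat x $ k + phi x" for x
  have [measurable]: "h \<in> borel_measurable P"
    unfolding h_def by measurable
  have h2: "integrable P (\<lambda>x. (norm (h x))\<^sup>2)"
    unfolding h_def
    by (intro integrable_norm_power2_add assms(10)
          complex_gaussian_vec_integrable_norm_power2[OF assms(11,6)]) measurable
  define E where "E = (\<integral>x. (norm (h x))\<^sup>2 \<partial>P)"
  define penalty where "penalty m = log 2 (1 + real T / (\<rho> * sigma2 + delta2) *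
    cvar P (\<lambda>x. herm (h x) (F (Hhat x) $ m)))" for m
  have var: "cvar P (\<lambda>x. herm (h x) (F (Hhat x) $ m)) \<le> Pmax * E" for m
    unfolding E_def by (rule cvar_herm_le_power_budget[OF _ _ h2 assms(14)]) measurable
  have noise: "delta2 \<le> \<rho> * sigma2 + delta2"
    using assms(4,7) by simp
  have "real T / delta2 * (Pmax * E) = real T * Pmax / delta2 * E"
    by simp
  then have "0 \<le> penalty m \<and> penalty m \<le> log 2 (1 + real T * Pmax / delta2 * E)" for m
    unfolding penalty_def using log_penalty_bounds[OF of_nat_0_le_iff assms(5) noise cvar_nonneg var]
    by metis
  then have "0 \<le> (\<Sum>m\<in>UNIV. penalty m)"
    and "(\<Sum>m\<in>UNIV. penalty m) \<le> (\<Sum>m::'k\<in>UNIV. log 2 (1 + real T * Pmax / delta2 * E))"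
    by (metis sum_nonneg, metis sum_mono)
  moreover have "rhat P Hhat phi F \<rho> sigma2 delta2 T k
      = rbar P Hhat phi F \<rho> sigma2 delta2 k - 1 / real T * (\<Sum>m\<in>UNIV. penalty m)"
    unfolding rhat_def penalty_def h_def ..
  ultimately show ?thesis
    unfolding E_def h_def using assms(2)
    by (simp add: divide_right_mono)
qed

end
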